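(* For every $n\ge 0$, \[ \sum_{k=0}^{n}\big(f_2^{(2n-k,k)}\big)^2=\binom{2n}{n},\qquad \sum_{k=1}^{\lfloor n/2\rfloor}\big(f_2^{(2n-2k,2k-1,1)}\big)^2=\frac{1}{n+1}\binom{2n}{n}-1 . \]
   Context: For a partition $\lambda$ of $2n$, a standard domino tableau of shape $\lambda$ is a tiling of the Young diagram of $\lambda$ by $n$ dominoes ($1\times2$ or $2\times1$ rectangles) labelled bijectively by $1,\ldots,n$ such that labels strictly increase along rows from left to right and down columns from top to bottom. $f_2^\lambda$ denotes the number of standard domino tableaux of shape $\lambda$. *)

theory Defs
  imports Complex_Main
begin

text \<open>A shape is given by its list of row lengths (a partition, listed weakly
decreasingly). Cells are pairs (row, column), 0-indexed.\<close>

definition young_diagram :: "nat list \<Rightarrow> (nat \<times> nat) set" where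
  "young_diagram lam = {(i, j). i < length lam \<and> j < lam ! i}"

definition domino :: "nat \<times> nat \<Rightarrow> nat \<times> nat \<Rightarrow> bool" where
  "domino c d \<longleftrightarrow> (fst c = fst d \<and> snd d = snd c + 1) \<or> (snd c = snd d \<and> fst d = fst c + 1)"

text \<open>A standard domino tableau of shape lam (|lam| = 2n) with n dominoes: a labelling
of the cells by 1..n such that each label occupies exactly the two cells of a domino,
and labels weakly increase along rows and down columns (strict between different
dominoes, since equal labels only occur within one domino). Outside the diagram the
labelling is 0 (so that tableaux are counted extensionally).\<close>
definition std_domino_tableau :: "nat list \<Rightarrow> nat \<Rightarrow> (nat \<times> nat \<Rightarrow> nat) \<Rightarrow> bool" where
  "std_domino_tableau lam n T \<longleftrightarrow>
     sum_list lam = 2 * n \<and>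
     (\<forall>x. x \<notin> young_diagram lam \<longrightarrow> T x = 0) \<and>
     (\<forall>x \<in> young_diagram lam. T x \<in> {1..n}) \<and>
     (\<forall>k \<in> {1..n}. \<exists>c d. domino c d \<and> {x \<in> young_diagram lam. T x = k} = {c, d}) \<and>
     (\<forall>i j. (i, j) \<in> young_diagram lam \<longrightarrow> (i, Suc j) \<in> young_diagram lam \<longrightarrow> T (i, j) \<le> T (i, Suc j)) \<and>
     (\<forall>i j. (i, j) \<in> young_diagram lam \<longrightarrow> (Suc i, j) \<in> young_diagram lam \<longrightarrow> T (i, j) \<le> T (Suc i, j))"

text \<open>f_2^lam: number of standard domino tableaux of shape lam (0 if |lam| is odd).\<close>
definition f2 :: "nat list \<Rightarrow> nat" where
  "f2 lam = card {T. std_domino_tableau lam (sum_list lam div 2) T}"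

end

theory Submission
  imports Defs
begin

(* Removing the domino with the largest label gives a recursion for domino tableaux over the
   removable dominoes of the shape. For two-row shapes (a, b) this recursion is Pascal's rule and
   gives f_2^(a,b) = C(n, b div 2); for the shapes (a, 2k-1, 1) it gives
   f_2 = C(n-1, k) - C(n-1, k-2). The first identity is then Vandermonde's sum of squares, after
   reindexing odd k by n - k div 2. For the second, the squared differences are symmetric under
   k <-> n+1-k, their full sum is 2 C(2n-2, n-1) - 2 C(2n-2, n+1) by Vandermonde, and
   C(2n-2, n-1) - C(2n-2, n+1) is the Catalan number C(2n, n) / (n+1). *)

section \<open>Domino tableaux of a set of cells\<close>

(* The conditions of std_domino_tableau for an arbitrary set of cells, so that the recursion
   below can remove dominoes. *)
definition domino_tableau :: "(nat \<times> nat) set \<Rightarrow> nat \<Rightarrow> (nat \<times> nat \<Rightarrow> nat) \<Rightarrow> bool" where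
  "domino_tableau S n T \<longleftrightarrow>
     (\<forall>x. x \<notin> S \<longrightarrow> T x = 0) \<and>
     (\<forall>x \<in> S. T x \<in> {1..n}) \<and>
     (\<forall>k \<in> {1..n}. \<exists>c d. domino c d \<and> {x \<in> S. T x = k} = {c, d}) \<and>
     (\<forall>i j. (i, j) \<in> S \<longrightarrow> (i, Suc j) \<in> S \<longrightarrow> T (i, j) \<le> T (i, Suc j)) \<and>
     (\<forall>i j. (i, j) \<in> S \<longrightarrow> (Suc i, j) \<in> S \<longrightarrow> T (i, j) \<le> T (Suc i, j))"

definition num_domino_tableaux :: "(nat \<times> nat) set \<Rightarrow> nat \<Rightarrow> nat" where
  "num_domino_tableaux S n = card {T. domino_tableau S n T}"

lemma f2_eq_num_domino_tableaux:
  "sum_list lam = 2 * n \<Longrightarrow> f2 lam = num_domino_tableaux (young_diagram lam) n"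
  unfolding f2_def num_domino_tableaux_def std_domino_tableau_def domino_tableau_def by simp

lemma domino_tableau_outside: "domino_tableau S n T \<Longrightarrow> x \<notin> S \<Longrightarrow> T x = 0"
  and domino_tableau_range: "domino_tableau S n T \<Longrightarrow> x \<in> S \<Longrightarrow> T x \<in> {1..n}"
  and domino_tableau_label:
    "domino_tableau S n T \<Longrightarrow> k \<in> {1..n} \<Longrightarrow> \<exists>c d. domino c d \<and> {x \<in> S. T x = k} = {c, d}"
  and domino_tableau_row:
    "domino_tableau S n T \<Longrightarrow> (i, j) \<in> S \<Longrightarrow> (i, Suc j) \<in> S \<Longrightarrow> T (i, j) \<le> T (i, Suc j)"
  and domino_tableau_col:
    "domino_tableau S n T \<Longrightarrow> (i, j) \<in> S \<Longrightarrow> (Suc i, j) \<in> S \<Longrightarrow> T (i, j) \<le> T (Suc i, j)"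
  unfolding domino_tableau_def by blast+

lemma finite_domino_tableaux:
  assumes "finite S"
  shows "finite {T. domino_tableau S n T}"
proof (rule finite_subset)
  show "{T. domino_tableau S n T} \<subseteq> {T. \<forall>x. (x \<in> S \<longrightarrow> T x \<in> {0..n}) \<and> (x \<notin> S \<longrightarrow> T x = 0)}"
    unfolding domino_tableau_def by auto
  show "finite {T. \<forall>x. (x \<in> S \<longrightarrow> T x \<in> {0..n}) \<and> (x \<notin> S \<longrightarrow> T x = (0::nat))}"
    using assms by (intro finite_set_of_finite_funs) auto
qed

lemma num_domino_tableaux_empty: "num_domino_tableaux {} 0 = 1"
proof -
  have "{T. domino_tableau {} 0 T} = {\<lambda>_. 0}"
    unfolding domino_tableau_def by auto
  then show ?thesis by (simp add: num_domino_tableaux_def)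
qed

(* The dominoes that can carry the largest label: no cell of S lies right of or below them. *)
definition removable_dominoes :: "(nat \<times> nat) set \<Rightarrow> (nat \<times> nat) set set" where
  "removable_dominoes S = {D. (\<exists>c d. domino c d \<and> D = {c, d}) \<and> D \<subseteq> S \<and>
     (\<forall>i j. (i, j) \<in> D \<longrightarrow> (i, Suc j) \<in> S \<longrightarrow> (i, Suc j) \<in> D) \<and>
     (\<forall>i j. (i, j) \<in> D \<longrightarrow> (Suc i, j) \<in> S \<longrightarrow> (Suc i, j) \<in> D)}"

lemma domino_tableau_remove_last:
  assumes T: "domino_tableau S (Suc n) T"
  defines "D \<equiv> {x \<in> S. T x = Suc n}"
  shows "D \<in> removable_dominoes S"
    and "domino_tableau (S - D) n (\<lambda>x. if T x = Suc n then 0 else T x)"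
proof -
  have le: "x \<in> S \<Longrightarrow> T x \<le> Suc n" and ge: "x \<in> S \<Longrightarrow> 1 \<le> T x" for x
    using domino_tableau_range[OF T] by fastforce+
  have "\<exists>c d. domino c d \<and> D = {c, d}"
    using domino_tableau_label[OF T, of "Suc n"] by (simp add: D_def)
  moreover have "(i, Suc j) \<in> D" if "(i, j) \<in> D" "(i, Suc j) \<in> S" for i j
    using that le domino_tableau_row[OF T, of i j] by (force simp: D_def)
  moreover have "(Suc i, j) \<in> D" if "(i, j) \<in> D" "(Suc i, j) \<in> S" for i j
    using that le domino_tableau_col[OF T, of i j] by (force simp: D_def)
  ultimately show "D \<in> removable_dominoes S"
    unfolding removable_dominoes_def D_def by blast
  show "domino_tableau (S - D) n (\<lambda>x. if T x = Suc n then 0 else T x)"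
    unfolding domino_tableau_def
  proof (intro conjI ballI allI impI)
    fix x assume "x \<notin> S - D"
    then show "(if T x = Suc n then 0 else T x) = 0"
      using domino_tableau_outside[OF T, of x] by (auto simp: D_def)
  next
    fix x assume "x \<in> S - D"
    then show "(if T x = Suc n then 0 else T x) \<in> {1..n}"
      using le[of x] ge[of x] by (auto simp: D_def)
  next
    fix k assume k: "k \<in> {1..n}"
    then have "{x \<in> S - D. (if T x = Suc n then 0 else T x) = k} = {x \<in> S. T x = k}"
      by (auto simp: D_def)
    with k show "\<exists>c d. domino c d \<and> {x \<in> S - D. (if T x = Suc n then 0 else T x) = k} = {c, d}"
      using domino_tableau_label[OF T, of k] by simp
  next
    fix i j assume "(i, j) \<in> S - D" "(i, Suc j) \<in> S - D"
    then show "(if T (i, j) = Suc n then 0 else T (i, j)) \<le> (if T (i, Suc j) = Suc n then 0 else T (i, Suc j))"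
      using domino_tableau_row[OF T, of i j] by (simp add: D_def)
  next
    fix i j assume "(i, j) \<in> S - D" "(Suc i, j) \<in> S - D"
    then show "(if T (i, j) = Suc n then 0 else T (i, j)) \<le> (if T (Suc i, j) = Suc n then 0 else T (Suc i, j))"
      using domino_tableau_col[OF T, of i j] by (simp add: D_def)
  qed
qed

lemma domino_tableau_add_last:
  assumes D: "D \<in> removable_dominoes S" and T: "domino_tableau (S - D) n T"
  shows "domino_tableau S (Suc n) (\<lambda>x. if x \<in> D then Suc n else T x)"
proof -
  have DS: "D \<subseteq> S" and domino: "\<exists>c d. domino c d \<and> D = {c, d}"
    and right: "\<And>i j. (i, j) \<in> D \<Longrightarrow> (i, Suc j) \<in> S \<Longrightarrow> (i, Suc j) \<in> D"
    and down: "\<And>i j. (i, j) \<in> D \<Longrightarrow> (Suc i, j) \<in> S \<Longrightarrow> (Suc i, j) \<in> D"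
    using D unfolding removable_dominoes_def by blast+
  have le: "x \<in> S - D \<Longrightarrow> T x \<le> n" and ge: "x \<in> S - D \<Longrightarrow> 1 \<le> T x" for x
    using domino_tableau_range[OF T] by fastforce+
  show ?thesis
    unfolding domino_tableau_def
  proof (intro conjI ballI allI impI)
    fix x assume "x \<notin> S"
    then show "(if x \<in> D then Suc n else T x) = 0"
      using DS domino_tableau_outside[OF T, of x] by auto
  next
    fix x assume "x \<in> S"
    then show "(if x \<in> D then Suc n else T x) \<in> {1..Suc n}"
      using le[of x] ge[of x] by auto
  next
    fix k assume k: "k \<in> {1..Suc n}"
    show "\<exists>c d. domino c d \<and> {x \<in> S. (if x \<in> D then Suc n else T x) = k} = {c, d}"
    proof (cases "k = Suc n")
      case True
      then have "{x \<in> S. (if x \<in> D then Suc n else T x) = k} = D"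
        using DS le by force
      with domino show ?thesis by simp
    next
      case False
      then have "{x \<in> S. (if x \<in> D then Suc n else T x) = k} = {x \<in> S - D. T x = k}" by auto
      with k False show ?thesis using domino_tableau_label[OF T, of k] by simp
    qed
  next
    fix i j assume "(i, j) \<in> S" "(i, Suc j) \<in> S"
    then show "(if (i, j) \<in> D then Suc n else T (i, j)) \<le> (if (i, Suc j) \<in> D then Suc n else T (i, Suc j))"
      using right[of i j] le[of "(i, j)"] domino_tableau_row[OF T, of i j] by auto
  next
    fix i j assume "(i, j) \<in> S" "(Suc i, j) \<in> S"
    then show "(if (i, j) \<in> D then Suc n else T (i, j)) \<le> (if (Suc i, j) \<in> D then Suc n else T (Suc i, j))"
      using down[of i j] le[of "(i, j)"] domino_tableau_col[OF T, of i j] by auto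
  qed
qed

lemma bij_betw_domino_tableau_remove_last:
  "bij_betw (\<lambda>T. ({x \<in> S. T x = Suc n}, \<lambda>x. if T x = Suc n then 0 else T x))
     {T. domino_tableau S (Suc n) T}
     (SIGMA D:removable_dominoes S. {T. domino_tableau (S - D) n T})"
  (is "bij_betw ?remove ?A ?B")
proof -
  let ?add = "\<lambda>(D, T). \<lambda>x. if x \<in> D then Suc n else T x"
  show ?thesis
  proof (rule bij_betw_byWitness)
    show "\<forall>T\<in>?A. ?add (?remove T) = T"
    proof
      fix T assume "T \<in> ?A"
      then have outside: "T x = 0" if "x \<notin> S" for x
        using that domino_tableau_outside by blast
      show "?add (?remove T) = T"
      proof
        fix x show "?add (?remove T) x = T x"
          using outside[of x] by (cases "x \<in> S") auto
      qed
    qed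
    show "\<forall>p\<in>?B. ?remove (?add p) = p"
    proof
      fix p assume "p \<in> ?B"
      then obtain D T where p: "p = (D, T)"
        and D: "D \<in> removable_dominoes S" and T: "domino_tableau (S - D) n T"
        by blast
      have DS: "D \<subseteq> S" using D unfolding removable_dominoes_def by blast
      have below: "T x \<le> n" if "x \<notin> D" for x
        using that domino_tableau_range[OF T, of x] domino_tableau_outside[OF T, of x]
        by (cases "x \<in> S") auto
      have "{x \<in> S. (if x \<in> D then Suc n else T x) = Suc n} = D"
        using DS below by force
      moreover have "(\<lambda>x. if (if x \<in> D then Suc n else T x) = Suc n then 0
          else if x \<in> D then Suc n else T x) = T"
      proof
        fix x show "(if (if x \<in> D then Suc n else T x) = Suc n then 0
            else if x \<in> D then Suc n else T x) = T x"
          using below[of x] domino_tableau_outside[OF T, of x] by (cases "x \<in> D") auto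
      qed
      ultimately show "?remove (?add p) = p"
        unfolding p prod.case by simp
    qed
    show "?remove ` ?A \<subseteq> ?B"
      using domino_tableau_remove_last by blast
    show "?add ` ?B \<subseteq> ?A"
    proof (rule image_subsetI)
      fix p assume "p \<in> ?B"
      then obtain D T where "p = (D, T)"
        and "D \<in> removable_dominoes S" and "domino_tableau (S - D) n T"
        by blast
      then show "?add p \<in> ?A"
        using domino_tableau_add_last by simp
    qed
  qed
qed

lemma finite_removable_dominoes:
  assumes "finite S"
  shows "finite (removable_dominoes S)"
proof (rule finite_subset)
  show "removable_dominoes S \<subseteq> Pow S"
    unfolding removable_dominoes_def by blast
qed (use assms in simp)

lemma num_domino_tableaux_Suc:
  assumes "finite S"
  shows "num_domino_tableaux S (Suc n) = (\<Sum>D\<in>removable_dominoes S. num_domino_tableaux (S - D) n)"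
proof -
  have "num_domino_tableaux S (Suc n) = card (SIGMA D:removable_dominoes S. {T. domino_tableau (S - D) n T})"
    unfolding num_domino_tableaux_def by (rule bij_betw_same_card[OF bij_betw_domino_tableau_remove_last])
  also have "\<dots> = (\<Sum>D\<in>removable_dominoes S. num_domino_tableaux (S - D) n)"
    unfolding num_domino_tableaux_def
    using assms by (intro card_SigmaI) (simp_all add: finite_removable_dominoes finite_domino_tableaux)
  finally show ?thesis .
qed

section \<open>Young diagrams with at most three rows\<close>

lemma finite_young_diagram: "finite (young_diagram lam)"
proof -
  have "young_diagram lam = (SIGMA i:{..<length lam}. {..<lam ! i})"
    unfolding young_diagram_def by auto
  then show ?thesis by simp
qed

lemma mem_young_diagram_two_rows:
  "(i, j) \<in> young_diagram [a, b] \<longleftrightarrow> (i = 0 \<and> j < a) \<or> (i = 1 \<and> j < b)"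
  unfolding young_diagram_def by (cases i) (auto simp: less_Suc_eq)

lemma mem_young_diagram_three_rows:
  "(i, j) \<in> young_diagram [a, b, c] \<longleftrightarrow> (i = 0 \<and> j < a) \<or> (i = 1 \<and> j < b) \<or> (i = 2 \<and> j < c)"
  unfolding young_diagram_def by (cases i) (auto simp: less_Suc_eq numeral_2_eq_2)

lemma removable_dominoesE:
  assumes "D \<in> removable_dominoes S"
  obtains i j i' j' where "D = {(i, j), (i', j')}" "(i' = i \<and> j' = Suc j) \<or> (j' = j \<and> i' = Suc i)"
    "(i, j) \<in> S" "(i', j') \<in> S"
    "\<And>i j. (i, j) \<in> D \<Longrightarrow> (i, Suc j) \<in> S \<Longrightarrow> (i, Suc j) \<in> D"
    "\<And>i j. (i, j) \<in> D \<Longrightarrow> (Suc i, j) \<in> S \<Longrightarrow> (Suc i, j) \<in> D"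
proof -
  from assms obtain c d where "domino c d" "D = {c, d}" "D \<subseteq> S"
    "\<And>i j. (i, j) \<in> D \<Longrightarrow> (i, Suc j) \<in> S \<Longrightarrow> (i, Suc j) \<in> D"
    "\<And>i j. (i, j) \<in> D \<Longrightarrow> (Suc i, j) \<in> S \<Longrightarrow> (Suc i, j) \<in> D"
    unfolding removable_dominoes_def by blast
  then show thesis
    using that[of "fst c" "snd c" "fst d" "snd d"] by (auto simp: domino_def)
qed

lemma removable_dominoesI:
  assumes "domino c d" "c \<in> S" "d \<in> S"
    "\<And>x. x \<in> {c, d} \<Longrightarrow> (fst x, Suc (snd x)) \<in> S \<Longrightarrow> (fst x, Suc (snd x)) \<in> {c, d}"
    "\<And>x. x \<in> {c, d} \<Longrightarrow> (Suc (fst x), snd x) \<in> S \<Longrightarrow> (Suc (fst x), snd x) \<in> {c, d}"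
  shows "{c, d} \<in> removable_dominoes S"
  unfolding removable_dominoes_def
proof (intro CollectI conjI allI impI)
  fix i j assume "(i, j) \<in> {c, d}" "(i, Suc j) \<in> S"
  then show "(i, Suc j) \<in> {c, d}"
    using assms(4)[of "(i, j)"] by simp
next
  fix i j assume "(i, j) \<in> {c, d}" "(Suc i, j) \<in> S"
  then show "(Suc i, j) \<in> {c, d}"
    using assms(5)[of "(i, j)"] by simp
qed (use assms(1-3) in blast)+

section \<open>Two-row shapes\<close>

lemma removable_dominoes_two_rows:
  assumes "b \<le> a"
  shows "D \<in> removable_dominoes (young_diagram [a, b]) \<longleftrightarrow>
    (D = {(0, a - 2), (0, a - 1)} \<and> b + 2 \<le> a) \<or>
    (D = {(1, b - 2), (1, b - 1)} \<and> 2 \<le> b) \<or>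
    (D = {(0, a - 1), (1, a - 1)} \<and> a = b \<and> 1 \<le> b)"
    (is "_ \<longleftrightarrow> ?horiz0 \<or> ?horiz1 \<or> ?vert")
proof
  assume "D \<in> removable_dominoes (young_diagram [a, b])"
  then obtain i j i' j' where D: "D = {(i, j), (i', j')}"
    and shape: "(i' = i \<and> j' = Suc j) \<or> (j' = j \<and> i' = Suc i)"
    and mem: "(i, j) \<in> young_diagram [a, b]" "(i', j') \<in> young_diagram [a, b]"
    and right: "\<And>i j. (i, j) \<in> D \<Longrightarrow> (i, Suc j) \<in> young_diagram [a, b] \<Longrightarrow> (i, Suc j) \<in> D"
    and down: "\<And>i j. (i, j) \<in> D \<Longrightarrow> (Suc i, j) \<in> young_diagram [a, b] \<Longrightarrow> (Suc i, j) \<in> D"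
    by (rule removable_dominoesE) blast
  note mem_young_diagram_two_rows [simp]
  from shape show "?horiz0 \<or> ?horiz1 \<or> ?vert"
  proof
    assume h: "i' = i \<and> j' = Suc j"
    have "(i, Suc (Suc j)) \<notin> young_diagram [a, b]" "(Suc i, j) \<notin> young_diagram [a, b]"
      using right[of i' j'] down[of i j] h D by auto
    with mem h have "(i = 0 \<and> a = j + 2 \<and> b \<le> j) \<or> (i = 1 \<and> b = j + 2)"
      by auto
    then show ?thesis
      using h D by (elim disjE) simp_all
  next
    assume v: "j' = j \<and> i' = Suc i"
    have "(i, Suc j) \<notin> young_diagram [a, b]"
      using right[of i j] v D by auto
    with mem v assms have "i = 0 \<and> a = Suc j \<and> b = Suc j"
      by auto
    then show ?thesis
      using v D by simp
  qed
next
  note mem_young_diagram_two_rows [simp]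
  assume "?horiz0 \<or> ?horiz1 \<or> ?vert"
  then show "D \<in> removable_dominoes (young_diagram [a, b])"
  proof (elim disjE conjE)
    assume "D = {(0, a - 2), (0, a - 1)}" "b + 2 \<le> a"
    then show ?thesis
      by (simp only:) (rule removable_dominoesI; auto simp: domino_def)
  next
    assume "D = {(1, b - 2), (1, b - 1)}" "2 \<le> b"
    then show ?thesis
      using assms by (simp only:) (rule removable_dominoesI; auto simp: domino_def)
  next
    assume "D = {(0, a - 1), (1, a - 1)}" "a = b" "1 \<le> b"
    then show ?thesis
      by (simp only:) (rule removable_dominoesI; auto simp: domino_def)
  qed
qed

lemma sum_three_alternatives:
  fixes f :: "'a \<Rightarrow> 'b::comm_monoid_add"
  assumes "\<And>x. x \<in> A \<longleftrightarrow> (x = u \<and> p) \<or> (x = v \<and> q) \<or> (x = w \<and> r)"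
    and "u \<noteq> v" "u \<noteq> w" "v \<noteq> w"
  shows "sum f A = (if p then f u else 0) + (if q then f v else 0) + (if r then f w else 0)"
proof -
  have "A = (if p then {u} else {}) \<union> (if q then {v} else {}) \<union> (if r then {w} else {})"
    using assms(1) by auto
  then show ?thesis
    using assms(2-4) by (cases p; cases q; cases r) (auto simp: add_ac)
qed

lemma num_domino_tableaux_two_rows_Suc:
  assumes "b \<le> a"
  shows "num_domino_tableaux (young_diagram [a, b]) (Suc n) =
      (if b + 2 \<le> a then num_domino_tableaux (young_diagram [a - 2, b]) n else 0)
    + (if 2 \<le> b then num_domino_tableaux (young_diagram [a, b - 2]) n else 0)
    + (if a = b \<and> 1 \<le> b then num_domino_tableaux (young_diagram [a - 1, b - 1]) n else 0)"
    (is "_ = ?rhs")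
proof -
  let ?Y = "young_diagram [a, b]"
  have "num_domino_tableaux ?Y (Suc n) = (\<Sum>D\<in>removable_dominoes ?Y. num_domino_tableaux (?Y - D) n)"
    by (rule num_domino_tableaux_Suc[OF finite_young_diagram])
  also have "\<dots> =
      (if b + 2 \<le> a then num_domino_tableaux (?Y - {(0, a - 2), (0, a - 1)}) n else 0)
    + (if 2 \<le> b then num_domino_tableaux (?Y - {(1, b - 2), (1, b - 1)}) n else 0)
    + (if a = b \<and> 1 \<le> b then num_domino_tableaux (?Y - {(0, a - 1), (1, a - 1)}) n else 0)"
    by (rule sum_three_alternatives[OF removable_dominoes_two_rows[OF assms]]) (auto simp: doubleton_eq_iff)
  also have "\<dots> = ?rhs"
    using assms by (intro arg_cong2[where f = "(+)"] if_cong refl arg_cong2[where f = num_domino_tableaux])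
      (auto simp: mem_young_diagram_two_rows)
  finally show ?thesis .
qed

lemma central_binomial_Suc: "(2 * m + 2) choose (m + 1) = 2 * ((2 * m + 1) choose m)"
proof -
  have "(2 * m + 1) choose (m + 1) = (2 * m + 1) choose m"
    using binomial_symmetric[of "m + 1" "2 * m + 1"] by simp
  then show ?thesis by simp
qed

lemma binomial_Suc_half:
  assumes "0 < n"
  shows "Suc n choose (Suc n div 2) = (n choose (n div 2)) + (n choose ((n - 1) div 2))"
proof (cases "even n")
  case True
  then obtain t where t: "n = 2 * t" "0 < t"
    using assms by auto
  then have "(n - 1) div 2 = t - 1"
    by presburger
  with t show ?thesis
    using choose_reduce_nat[of "Suc n" t] by (simp add: add.commute)
next
  case False
  then obtain t where "n = 2 * t + 1"
    by (metis oddE)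
  then show ?thesis
    using central_binomial_Suc[of t] by simp
qed

lemma num_domino_tableaux_two_rows:
  "b \<le> a \<Longrightarrow> a + b = 2 * n \<Longrightarrow> num_domino_tableaux (young_diagram [a, b]) n = n choose (b div 2)"
proof (induction n arbitrary: a b)
  case 0
  then have "young_diagram [a, b] = {}"
    by (auto simp: mem_young_diagram_two_rows)
  with 0 show ?case
    by (simp add: num_domino_tableaux_empty)
next
  case (Suc n)
  note step = num_domino_tableaux_two_rows_Suc[OF Suc.prems(1), of n]
  have "a \<noteq> b + 1"
    using Suc.prems(2) by presburger
  with Suc.prems(1) consider "b + 2 \<le> a" | "a = b"
    by linarith
  then show ?case
  proof cases
    case 1
    have first: "num_domino_tableaux (young_diagram [a - 2, b]) n = n choose (b div 2)"
      using 1 Suc.prems by (intro Suc.IH) auto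
    show ?thesis
    proof (cases "2 \<le> b")
      case True
      have "num_domino_tableaux (young_diagram [a, b - 2]) n = n choose ((b - 2) div 2)"
        using 1 True Suc.prems by (intro Suc.IH) auto
      moreover have "(b - 2) div 2 = b div 2 - 1"
        using True by presburger
      ultimately show ?thesis
        using first 1 True step choose_reduce_nat[of "Suc n" "b div 2"] by simp
    next
      case False
      with first 1 show ?thesis
        using step by simp
    qed
  next
    case 2
    with Suc.prems have b: "b = Suc n"
      by simp
    have below: "num_domino_tableaux (young_diagram [a - 1, b - 1]) n = n choose (n div 2)"
      using 2 b Suc.IH[of "a - 1" "b - 1"] by simp
    show ?thesis
    proof (cases "n = 0")
      case False
      have "num_domino_tableaux (young_diagram [a, b - 2]) n = n choose ((b - 2) div 2)"
        using 2 b False by (intro Suc.IH) auto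
      moreover have "b - 2 = n - 1"
        using b by simp
      ultimately have "num_domino_tableaux (young_diagram [a, b - 2]) n = n choose ((n - 1) div 2)"
        by simp
      with below 2 b False show ?thesis
        using step binomial_Suc_half[of n] by simp
    qed (use below 2 b step in simp)
  qed
qed

section \<open>The shapes (a, 2k - 1, 1)\<close>

lemma removable_dominoes_hook:
  assumes "b < a" "1 \<le> b"
  shows "D \<in> removable_dominoes (young_diagram [a, b, 1]) \<longleftrightarrow>
    (D = {(0, a - 2), (0, a - 1)} \<and> b + 2 \<le> a) \<or>
    (D = {(1, b - 2), (1, b - 1)} \<and> 3 \<le> b) \<or>
    (D = {(1, 0), (2, 0)} \<and> b = 1)"
    (is "_ \<longleftrightarrow> ?horiz0 \<or> ?horiz1 \<or> ?vert")
proof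
  assume "D \<in> removable_dominoes (young_diagram [a, b, 1])"
  then obtain i j i' j' where D: "D = {(i, j), (i', j')}"
    and shape: "(i' = i \<and> j' = Suc j) \<or> (j' = j \<and> i' = Suc i)"
    and mem: "(i, j) \<in> young_diagram [a, b, 1]" "(i', j') \<in> young_diagram [a, b, 1]"
    and right: "\<And>i j. (i, j) \<in> D \<Longrightarrow> (i, Suc j) \<in> young_diagram [a, b, 1] \<Longrightarrow> (i, Suc j) \<in> D"
    and down: "\<And>i j. (i, j) \<in> D \<Longrightarrow> (Suc i, j) \<in> young_diagram [a, b, 1] \<Longrightarrow> (Suc i, j) \<in> D"
    by (rule removable_dominoesE) blast
  note mem_young_diagram_three_rows [simp]
  from shape show "?horiz0 \<or> ?horiz1 \<or> ?vert"
  proof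
    assume h: "i' = i \<and> j' = Suc j"
    have "(i, Suc (Suc j)) \<notin> young_diagram [a, b, 1]" "(Suc i, j) \<notin> young_diagram [a, b, 1]"
      using right[of i' j'] down[of i j] h D by auto
    with mem h have "(i = 0 \<and> a = j + 2 \<and> b \<le> j) \<or> (i = 1 \<and> b = j + 2 \<and> j \<noteq> 0)"
      by auto
    then show ?thesis
      using h D by (elim disjE) simp_all
  next
    assume v: "j' = j \<and> i' = Suc i"
    have "(i, Suc j) \<notin> young_diagram [a, b, 1]" "(Suc (Suc i), j) \<notin> young_diagram [a, b, 1]"
      using right[of i j] down[of i' j'] v D by auto
    with mem v assms have "i = 1 \<and> j = 0 \<and> b = 1"
      by auto
    then show ?thesis
      using v D by (simp add: numeral_2_eq_2)
  qed
next
  note mem_young_diagram_three_rows [simp]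
  assume "?horiz0 \<or> ?horiz1 \<or> ?vert"
  then show "D \<in> removable_dominoes (young_diagram [a, b, 1])"
  proof (elim disjE conjE)
    assume "D = {(0, a - 2), (0, a - 1)}" "b + 2 \<le> a"
    then show ?thesis
      by (simp only:) (rule removable_dominoesI; auto simp: domino_def)
  next
    assume "D = {(1, b - 2), (1, b - 1)}" "3 \<le> b"
    then show ?thesis
      using assms by (simp only:) (rule removable_dominoesI; auto simp: domino_def)
  next
    assume "D = {(1, 0), (2, 0)}" "b = 1"
    then show ?thesis
      using assms by (simp only:) (rule removable_dominoesI; auto simp: domino_def)
  qed
qed

lemma num_domino_tableaux_hook_Suc:
  assumes "b < a" "1 \<le> b"
  shows "num_domino_tableaux (young_diagram [a, b, 1]) (Suc n) =
      (if b + 2 \<le> a then num_domino_tableaux (young_diagram [a - 2, b, 1]) n else 0)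
    + (if 3 \<le> b then num_domino_tableaux (young_diagram [a, b - 2, 1]) n else 0)
    + (if b = 1 then num_domino_tableaux (young_diagram [a, 0]) n else 0)"
    (is "_ = ?rhs")
proof -
  let ?Y = "young_diagram [a, b, 1]"
  have "num_domino_tableaux ?Y (Suc n) = (\<Sum>D\<in>removable_dominoes ?Y. num_domino_tableaux (?Y - D) n)"
    by (rule num_domino_tableaux_Suc[OF finite_young_diagram])
  also have "\<dots> =
      (if b + 2 \<le> a then num_domino_tableaux (?Y - {(0, a - 2), (0, a - 1)}) n else 0)
    + (if 3 \<le> b then num_domino_tableaux (?Y - {(1, b - 2), (1, b - 1)}) n else 0)
    + (if b = 1 then num_domino_tableaux (?Y - {(1, 0), (2, 0)}) n else 0)"
    by (rule sum_three_alternatives[OF removable_dominoes_hook[OF assms]]) (auto simp: doubleton_eq_iff)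
  also have "\<dots> = ?rhs"
    using assms by (intro arg_cong2[where f = "(+)"] if_cong refl arg_cong2[where f = num_domino_tableaux])
      (auto simp: mem_young_diagram_three_rows mem_young_diagram_two_rows)
  finally show ?thesis .
qed

definition int_choose :: "nat \<Rightarrow> int \<Rightarrow> int" where
  "int_choose m j = (if j < 0 then 0 else int (m choose nat j))"

lemma int_choose_of_nat [simp]: "int_choose m (int j) = int (m choose j)"
  by (simp add: int_choose_def)

lemma int_choose_Suc: "int_choose (Suc m) j = int_choose m j + int_choose m (j - 1)"
proof (cases "j \<le> 0")
  case True
  then show ?thesis by (cases "j = 0") (auto simp: int_choose_def)
next
  case False
  define k where "k = nat j - 1"
  with False have j: "j = int (Suc k)"
    by simp
  have "int (Suc k) - 1 = int k"
    by simp
  then show ?thesis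
    unfolding j int_choose_of_nat by simp
qed

lemma int_choose_symmetric: "int_choose m j = int_choose m (int m - j)"
proof (cases "0 \<le> j \<and> j \<le> int m")
  case True
  then obtain k where "j = int k" "k \<le> m"
    by (metis nonneg_int_cases of_nat_le_iff)
  then show ?thesis
    by (simp add: binomial_symmetric[of k m] flip: of_nat_diff)
qed (auto simp: int_choose_def)

lemma num_domino_tableaux_hook:
  "1 \<le> k \<Longrightarrow> 2 * k \<le> a \<Longrightarrow> a + 2 * k = 2 * n \<Longrightarrow>
    int (num_domino_tableaux (young_diagram [a, 2 * k - 1, 1]) n)
      = int_choose (n - 1) (int k) - int_choose (n - 1) (int k - 2)"
proof (induction n arbitrary: a k)
  case 0
  then show ?case by simp
next
  case (Suc n)
  let ?g = "\<lambda>m k. int_choose m (int k) - int_choose m (int k - 2)"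
  obtain m where m: "n = Suc m"
    using Suc.prems by (cases n) auto
  have "2 * k - 1 < a" "1 \<le> 2 * k - 1"
    using Suc.prems by auto
  moreover have "(2 * k - 1 + 2 \<le> a) = (2 * k + 1 \<le> a)" "(3 \<le> 2 * k - 1) = (2 \<le> k)"
    "2 * k - 1 - 2 = 2 * (k - 1) - 1" "(2 * k - 1 = 1) = (k = 1)"
    using Suc.prems by auto
  ultimately have step: "num_domino_tableaux (young_diagram [a, 2 * k - 1, 1]) (Suc n) =
      (if 2 * k + 1 \<le> a then num_domino_tableaux (young_diagram [a - 2, 2 * k - 1, 1]) n else 0)
    + (if 2 \<le> k then num_domino_tableaux (young_diagram [a, 2 * (k - 1) - 1, 1]) n else 0)
    + (if k = 1 then num_domino_tableaux (young_diagram [a, 0]) n else 0)"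
    using num_domino_tableaux_hook_Suc by (simp only:)
  have first: "(if 2 * k + 1 \<le> a then int (num_domino_tableaux (young_diagram [a - 2, 2 * k - 1, 1]) n) else 0)
      = ?g m k"
  proof (cases "2 * k + 1 \<le> a")
    case True
    with Suc.prems have "2 * k \<le> a - 2"
      by presburger
    then show ?thesis
      using True Suc.prems m Suc.IH[of k "a - 2"] by simp
  next
    case False
    with Suc.prems m have "int m - int k = int k - 2"
      by simp
    then show ?thesis
      using False int_choose_symmetric[of m "int k"] by simp
  qed
  have second: "(if 2 \<le> k then int (num_domino_tableaux (young_diagram [a, 2 * (k - 1) - 1, 1]) n) else 0)
      + (if k = 1 then int (num_domino_tableaux (young_diagram [a, 0]) n) else 0) = ?g m (k - 1)"
  proof (cases "k = 1")
    case True
    then show ?thesis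
      using Suc.prems num_domino_tableaux_two_rows[of 0 a n] by (simp add: int_choose_def)
  next
    case False
    then show ?thesis
      using Suc.prems m Suc.IH[of "k - 1" a] by (simp add: of_nat_diff)
  qed
  have pascal: "?g m k + ?g m (k - 1) = ?g (Suc m) k"
    using Suc.prems int_choose_Suc[of m "int k"] int_choose_Suc[of m "int k - 2"]
    by (simp add: of_nat_diff)
  have "int (num_domino_tableaux (young_diagram [a, 2 * k - 1, 1]) (Suc n)) = ?g (Suc m) k"
    using step first second pascal by (simp only: of_nat_add of_nat_0 if_distrib[of int])
  with m show ?case
    by simp
qed

section \<open>Sums of squares\<close>

lemma sum_div_2_symmetric:
  fixes f :: "nat \<Rightarrow> 'a::comm_monoid_add"
  assumes sym: "\<And>j. j \<le> n \<Longrightarrow> f (n - j) = f j"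
  shows "(\<Sum>k=0..n. f (k div 2)) = (\<Sum>k=0..n. f k)"
proof -
  define h where "h k = (if even k then k div 2 else n - k div 2)" for k
  define h' where "h' j = (if j \<le> n div 2 then 2 * j else 2 * (n - j) + 1)" for j
  have n: "n = 2 * (n div 2) + n mod 2" "n mod 2 < 2"
    by simp_all
  have "(\<Sum>k=0..n. f (h k)) = (\<Sum>j=0..n. f j)"
  proof (rule sum.reindex_bij_witness[where i = h' and j = h])
    fix k assume k: "k \<in> {0..n}"
    have "k = 2 * (k div 2) + k mod 2" "k mod 2 < 2"
      by simp_all
    with k n show "h' (h k) = k" "h k \<in> {0..n}"
      unfolding h_def h'_def by (auto simp: mod_2_eq_odd)
  next
    fix j assume "j \<in> {0..n}"
    with n show "h (h' j) = j" "h' j \<in> {0..n}"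
      unfolding h_def h'_def by auto
  qed simp
  moreover have "f (h k) = f (k div 2)" if "k \<in> {0..n}" for k
    using that sym[of "k div 2"] unfolding h_def by auto
  ultimately show ?thesis
    by simp
qed

lemma sum_symmetric_zero_middle:
  fixes f :: "nat \<Rightarrow> 'a::semiring_1"
  assumes sym: "\<And>k. k \<le> N \<Longrightarrow> f (N - k) = f k"
    and middle: "even N \<Longrightarrow> f (N div 2) = 0"
    and "1 \<le> N"
  shows "(\<Sum>k=0..N. f k) = 2 * (\<Sum>k=0..(N - 1) div 2. f k)"
proof -
  define h where "h = (N - 1) div 2"
  have "h < N"
    unfolding h_def using \<open>1 \<le> N\<close> by auto
  then have "(\<Sum>k=0..N. f k) = (\<Sum>k=0..h. f k) + (\<Sum>k=Suc h..N. f k)"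
    by (subst sum.union_disjoint[symmetric]) (auto intro: sum.cong)
  also have "(\<Sum>k=Suc h..N. f k) = (\<Sum>k=0..N - Suc h. f k)"
    using \<open>h < N\<close> sym
    by (intro sum.reindex_bij_witness[where i = "\<lambda>k. N - k" and j = "\<lambda>k. N - k"]) auto
  also have "(\<Sum>k=0..N - Suc h. f k) = (\<Sum>k=0..h. f k)"
  proof (cases "even N")
    case True
    then have shift: "N - Suc h = Suc h" and "Suc h = N div 2"
      unfolding h_def using \<open>1 \<le> N\<close> by presburger+
    then have "f (Suc h) = 0"
      using middle[OF True] by simp
    then show ?thesis
      unfolding shift by simp
  next
    case False
    then have "N - Suc h = h"
      unfolding h_def by presburger
    then show ?thesis by simp
  qed
  finally show ?thesis
    unfolding h_def by (simp add: mult_2)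
qed

lemma binomial_absorption_Suc: "Suc k * (n choose Suc k) = (n - k) * (n choose k)"
  by (metis binomial_absorption binomial_absorb_comp)

lemma central_binomial_difference:
  "(int m + 2) * (int ((2 * m) choose m) - int ((2 * m) choose (m + 2))) = int ((2 * m + 2) choose (m + 1))"
proof -
  define c0 where "c0 = int ((2 * m) choose m)"
  define c1 where "c1 = int ((2 * m) choose (m + 1))"
  define c2 where "c2 = int ((2 * m) choose (m + 2))"
  have "(m + 1) * ((2 * m) choose (m + 1)) = m * ((2 * m) choose m)"
    using binomial_absorption_Suc[of m "2 * m"] by simp
  then have absorb1: "(int m + 1) * c1 = int m * c0"
    unfolding c0_def c1_def by (metis of_nat_1 of_nat_add of_nat_mult)
  have absorb2: "(int m + 2) * c2 = (int m - 1) * c1"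
  proof (cases m)
    case (Suc m')
    have "(m + 2) * ((2 * m) choose (m + 2)) = m' * ((2 * m) choose (m + 1))"
      using binomial_absorption_Suc[of "m + 1" "2 * m"] Suc by simp
    then have "(int m + 2) * c2 = int m' * c1"
      unfolding c1_def c2_def by (metis of_nat_add of_nat_mult of_nat_numeral)
    with Suc show ?thesis
      by simp
  qed (simp add: c1_def c2_def)
  have "(2 * m + 1) choose m = (2 * m + 1) choose (m + 1)"
    using binomial_symmetric[of m "2 * m + 1"] by simp
  then have "(2 * m + 2) choose (m + 1) = 2 * ((2 * m) choose m) + 2 * ((2 * m) choose (m + 1))"
    using central_binomial_Suc[of m] by simp
  then have "int ((2 * m + 2) choose (m + 1)) = 2 * c0 + 2 * c1"
    unfolding c0_def c1_def by simp
  with absorb1 absorb2 show ?thesis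
    unfolding c0_def[symmetric] c2_def[symmetric] by (simp add: algebra_simps)
qed

lemma int_choose_minus_2:
  assumes "k \<le> m + 2"
  shows "int_choose m (int k - 2) = int (m choose (m + 2 - k))"
proof -
  have "int_choose m (int k - 2) = int_choose m (int m - (int k - 2))"
    by (rule int_choose_symmetric)
  also have "int m - (int k - 2) = int (m + 2 - k)"
    using assms by simp
  finally show ?thesis
    by simp
qed

lemma sum_squared_int_choose_differences:
  "(\<Sum>k=0..m+2. (int_choose m (int k) - int_choose m (int k - 2))^2)
     = 2 * int ((2 * m) choose m) - 2 * int ((2 * m) choose (m + 2))"
proof -
  have squares: "(\<Sum>k=0..m+2. (int (m choose k))^2) = int ((2 * m) choose m)"
  proof -
    have "(\<Sum>k=0..m+2. (int (m choose k))^2) = int (\<Sum>k=0..m+2. (m choose k)^2)"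
      by simp
    also have "(\<Sum>k=0..m+2. (m choose k)^2) = (\<Sum>k\<le>m. (m choose k)^2)"
      unfolding atLeast0AtMost by (rule sum.mono_neutral_right) auto
    finally show ?thesis
      by (simp only: choose_square_sum)
  qed
  have shifted_squares: "(\<Sum>k=0..m+2. (int_choose m (int k - 2))^2) = int ((2 * m) choose m)"
  proof -
    have "(\<Sum>k=0..m+2. (int_choose m (int k - 2))^2) = (\<Sum>k=0..m+2. (int (m choose (m + 2 - k)))^2)"
      by (rule sum.cong) (auto simp: int_choose_minus_2)
    also have "\<dots> = (\<Sum>k=0..m+2. (int (m choose k))^2)"
      using sum.atLeastAtMost_rev[of "\<lambda>k. (int (m choose k))^2" 0 "m + 2"] by simp
    finally show ?thesis
      using squares by simp
  qed
  have products: "(\<Sum>k=0..m+2. int_choose m (int k) * int_choose m (int k - 2)) = int ((2 * m) choose (m + 2))"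
  proof -
    have "(\<Sum>k=0..m+2. int_choose m (int k) * int_choose m (int k - 2))
        = int (\<Sum>k\<le>m+2. (m choose k) * (m choose (m + 2 - k)))"
      unfolding atLeast0AtMost by (simp add: int_choose_minus_2)
    also have "(\<Sum>k\<le>m+2. (m choose k) * (m choose (m + 2 - k))) = (m + m) choose (m + 2)"
      by (rule vandermonde)
    finally show ?thesis
      by (simp add: mult_2)
  qed
  have "(\<Sum>k=0..m+2. (int_choose m (int k) - int_choose m (int k - 2))^2) =
      (\<Sum>k=0..m+2. (int_choose m (int k))^2) + (\<Sum>k=0..m+2. (int_choose m (int k - 2))^2)
      - 2 * (\<Sum>k=0..m+2. int_choose m (int k) * int_choose m (int k - 2))"
    by (simp add: power2_diff sum.distrib sum_subtractf sum_distrib_left mult.assoc del: int_choose_of_nat)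
  then show ?thesis
    using squares shifted_squares products by simp
qed

lemma sum_squared_hook_numbers:
  assumes "1 \<le> n"
  shows "(int n + 1) * (\<Sum>k=0..n div 2. (int_choose (n - 1) (int k) - int_choose (n - 1) (int k - 2))^2)
    = int ((2 * n) choose n)"
proof -
  define m where "m = n - 1"
  define f where "f k = (int_choose m (int k) - int_choose m (int k - 2))^2" for k
  have n: "n = m + 1"
    unfolding m_def using assms by simp
  have "f (m + 2 - k) = f k" if "k \<le> m + 2" for k
  proof -
    have "int_choose m (int (m + 2 - k)) = int_choose m (int k - 2)"
      and "int_choose m (int (m + 2 - k) - 2) = int_choose m (int k)"
      using that int_choose_symmetric[of m "int (m + 2 - k)"] int_choose_symmetric[of m "int (m + 2 - k) - 2"]
      by (simp_all add: of_nat_diff)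
    then show ?thesis
      unfolding f_def by (simp add: power2_commute)
  qed
  moreover have "f ((m + 2) div 2) = 0" if "even (m + 2)"
  proof -
    from that obtain t where t: "m + 2 = 2 * t" ..
    then have "int m - int t = int t - 2"
      by simp
    then have "int_choose m (int t) = int_choose m (int t - 2)"
      using int_choose_symmetric[of m "int t"] by simp
    then show ?thesis
      unfolding f_def t by simp
  qed
  ultimately have "(\<Sum>k=0..m+2. f k) = 2 * (\<Sum>k=0..n div 2. f k)"
    using sum_symmetric_zero_middle[of "m + 2" f] by (simp add: n)
  moreover have "(\<Sum>k=0..m+2. f k) = 2 * int ((2 * m) choose m) - 2 * int ((2 * m) choose (m + 2))"
    unfolding f_def by (rule sum_squared_int_choose_differences)
  ultimately have "(\<Sum>k=0..n div 2. f k) = int ((2 * m) choose m) - int ((2 * m) choose (m + 2))"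
    by simp
  moreover have "int n + 1 = int m + 2" "2 * n = 2 * m + 2"
    using n by simp_all
  ultimately show ?thesis
    using central_binomial_difference[of m] unfolding f_def m_def[symmetric] by (simp only:) (simp add: n)
qed

lemma f2_two_rows: "b \<le> a \<Longrightarrow> a + b = 2 * n \<Longrightarrow> f2 [a, b] = n choose (b div 2)"
  by (simp add: f2_eq_num_domino_tableaux num_domino_tableaux_two_rows)

lemma f2_hook:
  assumes "1 \<le> k" "2 * k \<le> a" "a + 2 * k = 2 * n"
  shows "int (f2 [a, 2 * k - 1, 1]) = int_choose (n - 1) (int k) - int_choose (n - 1) (int k - 2)"
proof -
  have "sum_list [a, 2 * k - 1, 1] = 2 * n"
    using assms by simp
  then show ?thesis
    using num_domino_tableaux_hook[OF assms] by (simp only: f2_eq_num_domino_tableaux)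
qed

lemma sum_squared_f2_hooks:
  assumes "1 \<le> n"
  shows "(int n + 1) * (\<Sum>k=1..n div 2. int ((f2 [2*n - 2*k, 2*k - 1, 1])^2)) + (int n + 1)
    = int ((2*n) choose n)"
proof -
  define g where "g k = (int_choose (n - 1) (int k) - int_choose (n - 1) (int k - 2))^2" for k
  have "int ((f2 [2*n - 2*k, 2*k - 1, 1])^2) = g k" if "k \<in> {1..n div 2}" for k
  proof -
    have "int (f2 [2*n - 2*k, 2*k - 1, 1]) = int_choose (n - 1) (int k) - int_choose (n - 1) (int k - 2)"
      using that by (intro f2_hook) auto
    then show ?thesis
      unfolding g_def by simp
  qed
  then have "(\<Sum>k=1..n div 2. int ((f2 [2*n - 2*k, 2*k - 1, 1])^2)) = (\<Sum>k=1..n div 2. g k)"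
    by (rule sum.cong[OF refl])
  moreover have "g 0 = 1"
    unfolding g_def by (simp add: int_choose_def)
  then have "(\<Sum>k=0..n div 2. g k) = (\<Sum>k=1..n div 2. g k) + 1"
    using sum.atLeast_Suc_atMost[of 0 "n div 2" g] by simp
  moreover have "(int n + 1) * (\<Sum>k=0..n div 2. g k) = int ((2*n) choose n)"
    unfolding g_def using assms by (rule sum_squared_hook_numbers)
  ultimately show ?thesis
    by (simp add: algebra_simps)
qed

theorem mainTheorem3:
  fixes n :: nat
  shows "(\<Sum>k=0..n. (f2 [2*n - k, k])^2) = (2*n) choose n
    \<and> (\<Sum>k=1..n div 2. real ((f2 [2*n - 2*k, 2*k - 1, 1])^2))
           = 1 / real (n + 1) * real ((2*n) choose n) - 1"
proof
  have "(\<Sum>k=0..n. (f2 [2*n - k, k])^2) = (\<Sum>k=0..n. (n choose (k div 2))^2)"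
    by (intro sum.cong refl) (simp add: f2_two_rows)
  also have "\<dots> = (\<Sum>k=0..n. (n choose k)^2)"
    by (rule sum_div_2_symmetric) (simp add: binomial_symmetric[symmetric])
  finally show "(\<Sum>k=0..n. (f2 [2*n - k, k])^2) = (2*n) choose n"
    by (simp add: atLeast0AtMost choose_square_sum)
next
  show "(\<Sum>k=1..n div 2. real ((f2 [2*n - 2*k, 2*k - 1, 1])^2)) = 1 / real (n + 1) * real ((2*n) choose n) - 1"
  proof (cases "n = 0")
    case False
    then have "(real n + 1) * (\<Sum>k=1..n div 2. real ((f2 [2*n - 2*k, 2*k - 1, 1])^2)) + (real n + 1)
        = real ((2*n) choose n)"
      using arg_cong[OF sum_squared_f2_hooks[of n], of real_of_int] by simp
    then show ?thesis
      by (simp add: field_simps)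
  qed simp
qed

end
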